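(* Let $D$ be the minimal Dress ring of $\mathbb{R}(X)$. Then $$D=\{\, f/\gamma \;:\; f\in\mathbb{R}[X],\ \gamma\in\Gamma,\ \deg f\le \deg\gamma\,\}.$$
   Context: $D$ denotes the minimal Dress ring of the field $\mathbb{R}(X)$, i.e. the subring of $\mathbb{R}(X)$ generated by $\mathbb{Z}$ and all elements $1/(1+h^2)$ with $h\in\mathbb{R}(X)$. $\Gamma$ denotes the set of polynomials in $\mathbb{R}[X]$ having no real root, i.e. the polynomials of the form $\alpha\prod_i\gamma_i$ with $0\neq\alpha\in\mathbb{R}$ and each $\gamma_i$ a monic degree-two polynomial irreducible over $\mathbb{R}$ (nonzero constants included). *)

theory Defs
  imports "HOL-Computational_Algebra.Polynomial" "HOL-Computational_Algebra.Fraction_Field"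
begin

type_synonym ratfun = "real poly fract"

inductive_set min_dress_ring :: "ratfun set" where
  int_in: "of_int n \<in> min_dress_ring"
| gen_in: "1 / (1 + h ^ 2) \<in> min_dress_ring"
| add_in: "a \<in> min_dress_ring \<Longrightarrow> b \<in> min_dress_ring \<Longrightarrow> a + b \<in> min_dress_ring"
| neg_in: "a \<in> min_dress_ring \<Longrightarrow> - a \<in> min_dress_ring"
| mult_in: "a \<in> min_dress_ring \<Longrightarrow> b \<in> min_dress_ring \<Longrightarrow> a * b \<in> min_dress_ring"

definition Gamma :: "real poly set" where
  "Gamma = {p. p \<noteq> 0 \<and> (\<forall>x::real. poly p x \<noteq> 0)}"

end

theory Submission
  imports Defs "HOL-Computational_Algebra.Fundamental_Theorem_Algebra"
    "HOL-Computational_Algebra.Polynomial_Factorial" "HOL-Computational_Algebra.Field_as_Ring"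
begin

text \<open>
  A generator \<open>1 / (1 + h\<^sup>2)\<close> with \<open>h = p / q\<close> in lowest terms is \<open>q\<^sup>2 / (q\<^sup>2 + p\<^sup>2)\<close>, and
  \<open>q\<^sup>2 + p\<^sup>2\<close> has no real root and degree at least \<open>deg q\<^sup>2\<close>; since fractions \<open>f / \<gamma>\<close> with
  \<open>deg f \<le> deg \<gamma>\<close> form a ring, this gives one inclusion.
  Conversely, \<open>D\<close> contains all real constants and \<open>h / (1 + h\<^sup>2)\<close>, hence every
  \<open>s / (1 + r\<^sup>2)\<close> with \<open>r\<close> linear and \<open>deg s \<le> 2\<close>. A root-free \<open>\<gamma>\<close> of positive degree has a
  non-real complex root and is therefore divisible by such a \<open>1 + r\<^sup>2\<close>; writing
  \<open>f = t s + m\<close> for the cofactor \<open>s\<close> gives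
  \<open>f / \<gamma> = t / (1 + r\<^sup>2) + (m / s) \<cdot> 1 / (1 + r\<^sup>2)\<close>, and induction on \<open>deg \<gamma>\<close> applies.
\<close>

abbreviation const_ratfun :: "real \<Rightarrow> ratfun" where
  "const_ratfun c \<equiv> to_fract [:c:]"

lemma const_ratfun_1: "const_ratfun 1 = 1"
  by (metis one_pCons to_fract_1)

lemma const_ratfun_add: "const_ratfun (a + b) = const_ratfun a + const_ratfun b"
  by (simp flip: to_fract_add)

lemma const_ratfun_mult: "const_ratfun (a * b) = const_ratfun a * const_ratfun b"
  by (simp flip: to_fract_mult)

lemma const_ratfun_divide: "const_ratfun (a / b) = const_ratfun a / const_ratfun b"
proof (cases "b = 0")
  case False
  then have "const_ratfun b * const_ratfun (a / b) = const_ratfun a"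
    by (simp flip: const_ratfun_mult)
  with False show ?thesis by (simp add: field_simps)
qed simp

lemma to_fract_smult: "to_fract (smult c p) = const_ratfun c * to_fract p"
  by (simp add: to_fract_def)

lemma to_fract_of_nat: "to_fract (of_nat n) = of_nat n"
  by (induction n) simp_all

lemma const_ratfun_of_int: "const_ratfun (of_int n) = of_int n"
proof -
  have "to_fract (of_int n :: real poly) = of_int n"
    by (cases n) (simp_all add: to_fract_of_nat)
  then show ?thesis by (simp add: of_int_poly)
qed

lemma of_real_poly_add:
  "map_poly (of_real :: real \<Rightarrow> 'a::{comm_ring_1,real_algebra_1}) (p + q) =
    map_poly of_real p + map_poly of_real q"
  by (intro poly_eqI) (simp add: coeff_map_poly)

lemma of_real_poly_mult:
  "map_poly (of_real :: real \<Rightarrow> 'a::{comm_ring_1,real_algebra_1}) (p * q) =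
    map_poly of_real p * map_poly of_real q"
  by (intro poly_eqI) (simp add: coeff_map_poly coeff_mult)

lemma degree_le_1_poly_eq: "degree p \<le> 1 \<Longrightarrow> p = [:coeff p 0, coeff p 1:]"
  by (intro poly_eqI) (auto simp: coeff_pCons coeff_eq_0 split: nat.split)

lemma degree_le_2_poly_eq: "degree p \<le> 2 \<Longrightarrow> p = [:coeff p 0, coeff p 1, coeff p 2:]"
  by (intro poly_eqI) (auto simp: coeff_pCons coeff_eq_0 numeral_2_eq_2 split: nat.split)

lemma one_plus_square_nonzero: "1 + h ^ 2 \<noteq> (0::ratfun)"
proof
  assume "1 + h ^ 2 = 0"
  obtain p q where h: "h = Fract p q" "q \<noteq> 0" by (cases h)
  with \<open>1 + h ^ 2 = 0\<close> have "q * q + p * p = 0"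
    by (simp add: power2_eq_square One_fract_def Zero_fract_def eq_fract algebra_simps)
  then have "poly q x * poly q x + poly p x * poly p x = 0" for x
    by (metis poly_0 poly_add poly_mult)
  then have "poly q x = 0" for x
    by (metis add_nonneg_eq_0_iff mult_eq_0_iff zero_le_square)
  with \<open>q \<noteq> 0\<close> show False
    using poly_all_0_iff_0 by blast
qed

lemma min_dress_ring_diff:
  "a \<in> min_dress_ring \<Longrightarrow> b \<in> min_dress_ring \<Longrightarrow> a - b \<in> min_dress_ring"
  by (metis diff_conv_add_uminus min_dress_ring.add_in min_dress_ring.neg_in)

text \<open>A real number in \<open>(0, 1]\<close> is \<open>1 / (1 + t\<^sup>2)\<close> with \<open>t = sqrt (1/c - 1)\<close>.\<close>
lemma min_dress_ring_const: "const_ratfun c \<in> min_dress_ring"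
proof -
  have frac: "const_ratfun c \<in> min_dress_ring" if "0 < c" "c \<le> 1" for c
  proof -
    define t where "t = sqrt (1 / c - 1)"
    have "1 + const_ratfun t ^ 2 = const_ratfun (1 + t ^ 2)"
      by (simp add: power2_eq_square const_ratfun_mult const_ratfun_add const_ratfun_1)
    also have "1 + t ^ 2 = 1 / c"
      using that by (simp add: t_def)
    finally have "1 / (1 + const_ratfun t ^ 2) = const_ratfun c"
      by (simp add: const_ratfun_divide const_ratfun_1)
    then show ?thesis
      by (metis min_dress_ring.gen_in)
  qed
  have "const_ratfun c = const_ratfun (of_int \<lfloor>c\<rfloor>) + const_ratfun (c - of_int \<lfloor>c\<rfloor>)"
    by (simp flip: const_ratfun_add)
  moreover have "const_ratfun (c - of_int \<lfloor>c\<rfloor>) \<in> min_dress_ring"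
    using frac[of "c - of_int \<lfloor>c\<rfloor>"] min_dress_ring.int_in[of 0]
    by (cases "c = of_int \<lfloor>c\<rfloor>") (auto, linarith+)
  ultimately show ?thesis
    by (metis const_ratfun_of_int min_dress_ring.add_in min_dress_ring.int_in)
qed

text \<open>With \<open>k = (1 + h) / (1 - h)\<close> one has \<open>1 / (1 + k\<^sup>2) = 1/2 - h / (1 + h\<^sup>2)\<close>.\<close>
lemma min_dress_ring_odd_gen: "h / (1 + h ^ 2) \<in> min_dress_ring"
proof (cases "h = 1")
  case True
  then show ?thesis using min_dress_ring.gen_in[of 1] by simp
next
  case False
  define k where "k = (1 + h) / (1 - h)"
  have "1 - h \<noteq> 0" using False by simp
  then have "1 + k ^ 2 = ((1 - h) ^ 2 + (1 + h) ^ 2) / (1 - h) ^ 2"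
    by (simp add: k_def power_divide add_divide_eq_iff)
  also have "(1 - h) ^ 2 + (1 + h) ^ 2 = 2 * (1 + h ^ 2)"
    by (simp add: power2_eq_square algebra_simps)
  finally have "1 / (1 + k ^ 2) = (1 - h) ^ 2 / (2 * (1 + h ^ 2))"
    by simp
  also have "\<dots> = 1 / (1 + 1 ^ 2) - h / (1 + h ^ 2)"
    using one_plus_square_nonzero[of h]
    by (simp add: divide_simps) (simp add: power2_eq_square algebra_simps)
  finally have "h / (1 + h ^ 2) = 1 / (1 + 1 ^ 2) - 1 / (1 + k ^ 2)"
    by simp
  then show ?thesis
    by (metis min_dress_ring.gen_in min_dress_ring_diff)
qed

lemma min_dress_ring_quadratic_over_one_plus_square:
  "(const_ratfun a + h * (const_ratfun b + h * const_ratfun c)) / (1 + h ^ 2) \<in> min_dress_ring"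
proof -
  have "(const_ratfun a + h * (const_ratfun b + h * const_ratfun c)) / (1 + h ^ 2) =
      (const_ratfun a - const_ratfun c) * (1 / (1 + h ^ 2)) + const_ratfun b * (h / (1 + h ^ 2))
      + const_ratfun c"
    using one_plus_square_nonzero[of h]
    by (simp add: divide_simps) (simp add: power2_eq_square algebra_simps)
  then show ?thesis
    by (metis min_dress_ring.add_in min_dress_ring.mult_in min_dress_ring_diff
        min_dress_ring.gen_in min_dress_ring_odd_gen min_dress_ring_const)
qed

lemma linear_poly_has_compositional_inverse:
  fixes r :: "'a::field poly"
  assumes "degree r = 1"
  obtains u where "pcompose u r = [:0, 1:]"
proof -
  have "r = [:coeff r 0, coeff r 1:]"
    using assms by (intro degree_le_1_poly_eq) simp
  moreover have "coeff r 1 \<noteq> 0"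
    using assms by (metis leading_coeff_0_iff degree_0 zero_neq_one)
  ultimately obtain c0 c1 where r: "r = [:c0, c1:]" and "c1 \<noteq> 0"
    by blast
  then have "pcompose [:- c0 / c1, 1 / c1:] r = [:0, 1:]"
    by (simp add: pcompose_pCons)
  then show ?thesis
    by (rule that)
qed

text \<open>Composing with the inverse of the linear polynomial \<open>r\<close> writes \<open>s\<close> as a quadratic
  polynomial in \<open>r\<close>.\<close>
lemma min_dress_ring_Fract_one_plus_square:
  assumes r: "degree r = 1" and s: "degree s \<le> 2"
  shows "Fract s (1 + r ^ 2) \<in> min_dress_ring"
proof -
  obtain u where u: "pcompose u r = [:0, 1:]"
    using linear_poly_has_compositional_inverse[OF r] .
  have "degree u = 1"
    using degree_pcompose[of u r] r u by simp
  then have "degree (pcompose s u) \<le> 2"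
    using s by (simp add: degree_pcompose)
  then obtain a b c where "s = pcompose [:a, b, c:] r"
    by (metis degree_le_2_poly_eq pcompose_assoc pcompose_idR u)
  then have "to_fract s =
      const_ratfun a + to_fract r * (const_ratfun b + to_fract r * const_ratfun c)"
    by (simp add: pcompose_pCons to_fract_smult algebra_simps)
  then have "Fract s (1 + r ^ 2) =
      (const_ratfun a + to_fract r * (const_ratfun b + to_fract r * const_ratfun c))
        / (1 + to_fract r ^ 2)"
    by (simp add: Fract_conv_to_fract power2_eq_square)
  then show ?thesis
    using min_dress_ring_quadratic_over_one_plus_square by simp
qed

lemma poly_of_real_poly_of_real:
  "poly (map_poly (of_real :: real \<Rightarrow> 'a::{comm_ring_1,real_algebra_1}) p) (of_real x) =
    of_real (poly p x)"
  by (induction p) (simp_all add: map_poly_pCons)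

lemma linear_real_poly_nonreal_root_eq_0:
  assumes "degree p \<le> 1" "poly (map_poly complex_of_real p) z = 0" "Im z \<noteq> 0"
  shows "p = 0"
proof -
  have p: "p = [:coeff p 0, coeff p 1:]"
    using assms(1) by (rule degree_le_1_poly_eq)
  then have "complex_of_real (coeff p 0) + z * complex_of_real (coeff p 1) = 0"
    using assms(2)
    by (metis map_poly_pCons of_real_0 poly_pCons map_poly_0 poly_0 add_0_right mult_zero_right)
  then have "coeff p 1 = 0 \<and> coeff p 0 = 0"
    using assms(3) by (auto simp: complex_eq_iff)
  then show ?thesis
    by (subst p) simp
qed

lemma degree_one_plus_square:
  fixes r :: "'a::idom poly"
  assumes "degree r = 1"
  shows "degree (1 + r ^ 2) = 2"
proof -
  have "degree (r ^ 2) = 2"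
    using assms by (metis degree_power_eq mult.right_neutral zero_neq_one degree_0)
  then show ?thesis
    by (simp add: degree_add_eq_right)
qed

text \<open>A complex root \<open>a + b\<i>\<close> of \<open>g\<close> with \<open>b \<noteq> 0\<close> is a root of \<open>1 + ((X - a) / b)\<^sup>2\<close>; the
  remainder of \<open>g\<close> modulo this quadratic is a real linear polynomial with that nonreal root.\<close>
lemma Gamma_has_quadratic_factor:
  assumes "g \<in> Gamma" "degree g > 0"
  obtains r where "degree r = 1" "1 + r ^ 2 dvd g"
proof -
  let ?C = "map_poly complex_of_real"
  obtain z where z: "poly (?C g) z = 0"
    using alg_closed_imp_poly_has_root[of "?C g"] assms(2) by (auto simp: degree_map_poly)
  have "Im z \<noteq> 0"
  proof
    assume "Im z = 0"
    then have "z = of_real (Re z)"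
      by (simp add: complex_eq_iff)
    then have "of_real (poly g (Re z)) = (0 :: complex)"
      using z by (metis poly_of_real_poly_of_real)
    then show False
      using assms(1) by (simp add: Gamma_def)
  qed
  define r where "r = [:- Re z / Im z, 1 / Im z:]"
  have r: "degree r = 1"
    using \<open>Im z \<noteq> 0\<close> by (simp add: r_def)
  have "poly (?C (1 + r ^ 2)) z = 1 + ((z - Re z) / Im z) ^ 2"
    using \<open>Im z \<noteq> 0\<close>
    by (simp add: r_def of_real_poly_add of_real_poly_mult power2_eq_square map_poly_pCons
        field_simps)
  also have "(z - Re z) / Im z = \<i>"
    using \<open>Im z \<noteq> 0\<close> by (simp add: complex_eq_iff)
  finally have root: "poly (?C (1 + r ^ 2)) z = 0"
    by simp
  have "g = g div (1 + r ^ 2) * (1 + r ^ 2) + g mod (1 + r ^ 2)"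
    by (rule div_mult_mod_eq[symmetric])
  then have "poly (?C (g mod (1 + r ^ 2))) z = 0"
    using z root
    by (metis of_real_poly_add of_real_poly_mult poly_add poly_mult mult_zero_right add_0)
  moreover have "degree (g mod (1 + r ^ 2)) \<le> 1"
    using degree_mod_less[of "1 + r ^ 2" g] degree_one_plus_square[OF r] by fastforce
  ultimately have "g mod (1 + r ^ 2) = 0"
    using linear_real_poly_nonreal_root_eq_0 \<open>Im z \<noteq> 0\<close> by blast
  then show ?thesis
    using that r by (simp add: mod_eq_0_iff_dvd)
qed

lemma Gamma_mult: "g1 \<in> Gamma \<Longrightarrow> g2 \<in> Gamma \<Longrightarrow> g1 * g2 \<in> Gamma"
  by (auto simp: Gamma_def)

lemma Gamma_dvd: "g \<in> Gamma \<Longrightarrow> s dvd g \<Longrightarrow> s \<in> Gamma"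
  by (auto simp: Gamma_def)

lemma one_in_Gamma: "1 \<in> Gamma"
  by (simp add: Gamma_def)

lemma sum_of_squares_in_Gamma:
  fixes p q :: "real poly"
  assumes "coprime p q" "q \<noteq> 0"
  shows "q ^ 2 + p ^ 2 \<in> Gamma"
proof -
  have "poly (q ^ 2 + p ^ 2) x \<noteq> 0" for x
  proof
    assume "poly (q ^ 2 + p ^ 2) x = 0"
    then have "poly q x = 0" "poly p x = 0"
      by (simp_all add: sum_power2_eq_zero_iff)
    then have "[:- x, 1:] dvd q" "[:- x, 1:] dvd p"
      by (simp_all add: poly_eq_0_iff_dvd)
    then have "is_unit [:- x, 1:]"
      using assms(1) coprime_common_divisor by blast
    then show False
      by (simp add: is_unit_iff_degree)
  qed
  then show ?thesis
    by (auto simp: Gamma_def)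
qed

lemma degree_square_le_sum_of_squares:
  fixes p q :: "real poly"
  shows "degree (q ^ 2) \<le> degree (q ^ 2 + p ^ 2)"
proof (cases "degree q < degree p")
  case True
  then have "p \<noteq> 0"
    by auto
  with True have "degree (q ^ 2) < degree (p ^ 2)"
    using degree_power_le[of q 2] by (simp add: degree_power_eq)
  then show ?thesis
    by (simp add: degree_add_eq_right)
next
  case False
  show ?thesis
  proof (cases "q = 0")
    case False
    have "coeff (p ^ 2) (2 * degree q) \<ge> 0"
    proof (cases "degree p = degree q")
      case True
      then show ?thesis
        using coeff_mult_degree_sum[of p p] by (simp add: power2_eq_square mult_2)
    next
      case False
      then have "degree (p ^ 2) < 2 * degree q"
        using \<open>\<not> degree q < degree p\<close> degree_power_le[of p 2] by linarith
      then show ?thesis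
        by (simp add: coeff_eq_0)
    qed
    moreover have "coeff (q ^ 2) (2 * degree q) > 0"
    proof -
      have "lead_coeff q \<noteq> 0"
        using False by simp
      then have "0 < lead_coeff q * lead_coeff q"
        by (metis not_real_square_gt_zero)
      then show ?thesis
        using coeff_mult_degree_sum[of q q] by (simp add: power2_eq_square mult_2)
    qed
    ultimately have "coeff (q ^ 2 + p ^ 2) (2 * degree q) \<noteq> 0"
      by simp
    then show ?thesis
      using False by (simp add: le_degree degree_power_eq)
  qed simp
qed

text \<open>In lowest terms \<open>h = p / q\<close>, and \<open>1 / (1 + h\<^sup>2) = q\<^sup>2 / (q\<^sup>2 + p\<^sup>2)\<close>.\<close>
lemma generator_in_Gamma_fracts:
  "\<exists>f g. 1 / (1 + h ^ 2) = Fract f g \<and> g \<in> Gamma \<and> degree f \<le> degree g"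
proof -
  define p q where "p = fst (quot_of_fract h)" and "q = snd (quot_of_fract h)"
  have "q \<noteq> 0" "coprime p q"
    by (simp_all add: p_def q_def coprime_quot_of_fract)
  have "h = Fract p q"
    by (simp add: p_def q_def)
  with \<open>q \<noteq> 0\<close> have "1 / (1 + h ^ 2) = Fract (q ^ 2) (q ^ 2 + p ^ 2)"
    by (simp add: power2_eq_square One_fract_def algebra_simps)
  then show ?thesis
    using sum_of_squares_in_Gamma[OF \<open>coprime p q\<close> \<open>q \<noteq> 0\<close>] degree_square_le_sum_of_squares
    by blast
qed

lemma min_dress_ring_in_Gamma_fracts:
  "x \<in> min_dress_ring \<Longrightarrow> \<exists>f g. x = Fract f g \<and> g \<in> Gamma \<and> degree f \<le> degree g"
proof (induction rule: min_dress_ring.induct)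
  case (int_in n)
  have "(of_int n :: ratfun) = Fract [:of_int n:] 1"
    by (simp flip: const_ratfun_of_int add: to_fract_def)
  then show ?case
    using one_in_Gamma by fastforce
next
  case (gen_in h)
  show ?case
    by (rule generator_in_Gamma_fracts)
next
  case (add_in a b)
  then obtain f1 g1 f2 g2 where a: "a = Fract f1 g1" "g1 \<in> Gamma" "degree f1 \<le> degree g1"
    and b: "b = Fract f2 g2" "g2 \<in> Gamma" "degree f2 \<le> degree g2"
    by blast
  have "g1 \<noteq> 0" "g2 \<noteq> 0"
    using a b by (auto simp: Gamma_def)
  then have "a + b = Fract (f1 * g2 + f2 * g1) (g1 * g2)"
    using a b by simp
  moreover have "degree (f1 * g2 + f2 * g1) \<le> degree (g1 * g2)"
    using a b \<open>g1 \<noteq> 0\<close> \<open>g2 \<noteq> 0\<close> degree_mult_le[of f1 g2] degree_mult_le[of f2 g1]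
    by (auto simp: degree_mult_eq intro: degree_add_le)
  ultimately show ?case
    using Gamma_mult a b by blast
next
  case (neg_in a)
  then show ?case
    by (metis degree_minus minus_fract)
next
  case (mult_in a b)
  then obtain f1 g1 f2 g2 where a: "a = Fract f1 g1" "g1 \<in> Gamma" "degree f1 \<le> degree g1"
    and b: "b = Fract f2 g2" "g2 \<in> Gamma" "degree f2 \<le> degree g2"
    by blast
  have "g1 \<noteq> 0" "g2 \<noteq> 0"
    using a b by (auto simp: Gamma_def)
  then have "degree (f1 * f2) \<le> degree (g1 * g2)"
    using a b degree_mult_le[of f1 f2] by (simp add: degree_mult_eq)
  then show ?case
    using Gamma_mult a b by (metis mult_fract)
qed

lemma degree_div_le:
  fixes f s :: "'a::field poly"
  assumes "degree f \<le> n + degree s"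
  shows "degree (f div s) \<le> n"
proof (cases "s = 0 \<or> f div s = 0")
  case False
  have "degree (f div s) + degree s = degree (f - f mod s)"
    using False by (simp add: degree_mult_eq minus_mod_eq_mult_div)
  also have "\<dots> \<le> max (degree f) (degree (f mod s))"
    by (rule degree_diff_le_max)
  also have "\<dots> \<le> n + degree s"
    using assms degree_mod_less[of s f] False by auto
  finally show ?thesis
    by simp
qed auto

lemma Fract_in_min_dress_ring:
  assumes "g \<in> Gamma" "degree f \<le> degree g"
  shows "Fract f g \<in> min_dress_ring"
  using assms
proof (induction "degree g" arbitrary: f g rule: less_induct)
  case less
  show ?case
  proof (cases "degree g = 0")
    case True
    then obtain c d where "f = [:c:]" "g = [:d:]"
      using less.prems(2) by (metis degree_eq_zeroE le_zero_eq)
    then have "Fract f g = const_ratfun (c / d)"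
      by (simp add: Fract_conv_to_fract const_ratfun_divide)
    then show ?thesis
      by (simp add: min_dress_ring_const)
  next
    case False
    then obtain r where r: "degree r = 1" and "1 + r ^ 2 dvd g"
      using Gamma_has_quadratic_factor less.prems(1) by blast
    then obtain s where g: "g = (1 + r ^ 2) * s"
      by (elim dvdE)
    have "s \<in> Gamma"
      using Gamma_dvd less.prems(1) g by simp
    then have "s \<noteq> 0" "1 + r ^ 2 \<noteq> 0"
      using r degree_one_plus_square[OF r] by (auto simp: Gamma_def)
    then have deg_g: "degree g = 2 + degree s"
      using g degree_one_plus_square[OF r] by (simp add: degree_mult_eq)
    have "Fract f g =
        (to_fract (f div s) * to_fract s + to_fract (f mod s)) / (to_fract (1 + r ^ 2) * to_fract s)"
      by (metis Fract_conv_to_fract div_mult_mod_eq g to_fract_add to_fract_mult)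
    also have "\<dots> = Fract (f div s) (1 + r ^ 2) + Fract (f mod s) s * Fract 1 (1 + r ^ 2)"
      using \<open>s \<noteq> 0\<close> \<open>1 + r ^ 2 \<noteq> 0\<close> to_fract_eq_0_iff[of s] to_fract_eq_0_iff[of "1 + r ^ 2"]
      by (simp add: Fract_conv_to_fract field_simps del: to_fract_add to_fract_eq_0_iff)
    moreover have "Fract (f div s) (1 + r ^ 2) \<in> min_dress_ring"
      using less.prems(2) deg_g
      by (intro min_dress_ring_Fract_one_plus_square[OF r] degree_div_le) simp
    moreover have "Fract 1 (1 + r ^ 2) \<in> min_dress_ring"
      by (simp add: min_dress_ring_Fract_one_plus_square[OF r])
    moreover have "Fract (f mod s) s \<in> min_dress_ring"
      using less.hyps[of s "f mod s"] deg_g \<open>s \<in> Gamma\<close> \<open>s \<noteq> 0\<close> degree_mod_less[of s f]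
      by fastforce
    ultimately show ?thesis
      by (metis min_dress_ring.add_in min_dress_ring.mult_in)
  qed
qed

theorem proposition2p1:
  shows "min_dress_ring = {Fract f g | f g. g \<in> Gamma \<and> degree f \<le> degree g}"
  using min_dress_ring_in_Gamma_fracts Fract_in_min_dress_ring by blast

end
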